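(* Let $Q$ be a square-free word of length $n\geq 2$. Then the number of almost-square factors of $Q$ (counted as occurrences, i.e., as pairs (starting position, length) such that the corresponding factor is an almost-square) is less than $2n\log_{5/4} n$.
   Context: Words are finite sequences of letters. A factor of $Q$ is a contiguous subword. An extension of a word $W$ over an alphabet $\mathbb{A}$ is a word $W_1xW_2$ with $W=W_1W_2$ ($W_1,W_2$ possibly empty) and $x\in\mathbb{A}$. An almost-square is a word of the form $WW'$ where $W'$ is either an extension of $W$ or is obtained by deleting one letter from $W$. A square is a nonempty word of the form $YY$; a word is square-free if none of its factors is a square. *)

theory Defs
  imports Complex_Main
begin

definition is_factor :: "'a list \<Rightarrow> 'a list \<Rightarrow> bool" where
  "is_factor u Q \<longleftrightarrow> (\<exists>p s. Q = p @ u @ s)"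

definition is_extension :: "'a list \<Rightarrow> 'a list \<Rightarrow> bool" where
  "is_extension V W \<longleftrightarrow> (\<exists>W1 W2 x. W = W1 @ W2 \<and> V = W1 @ x # W2)"

definition is_deletion :: "'a list \<Rightarrow> 'a list \<Rightarrow> bool" where
  "is_deletion V W \<longleftrightarrow> (\<exists>W1 W2 x. W = W1 @ x # W2 \<and> V = W1 @ W2)"

definition almost_square :: "'a list \<Rightarrow> bool" where
  "almost_square U \<longleftrightarrow> (\<exists>W W'. U = W @ W' \<and> (is_extension W' W \<or> is_deletion W' W))"

definition square_free :: "'a list \<Rightarrow> bool" where
  "square_free Q \<longleftrightarrow> \<not> (\<exists>Y. Y \<noteq> [] \<and> is_factor (Y @ Y) Q)"

definition almost_square_occs :: "'a list \<Rightarrow> (nat \<times> nat) set" where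
  "almost_square_occs Q = {(i, l). 0 < l \<and> i + l \<le> length Q \<and> almost_square (take l (drop i Q))}"

end

theory Submission
  imports Defs
begin

text \<open>An almost-square is either a deletion square W1 x W2 W1 W2 or an extension square
  W1 W2 W1 x W2, and reversal exchanges the two kinds; so it suffices to show that a square-free
  word of length n has fewer than n log_{5/4} n occurrences of deletion squares.
  A deletion square of length 2k - 1 at position i means that, from i on, the word agrees with
  its shift by k before the deleted letter and with its shift by k - 1 after it. Two such
  squares at the same position with half-lengths k < k' can be compared letter by letter, and
  unless k < 4 (k' - k) this comparison exhibits a square of period k' - k, k' - k \<plusminus> 1 or k.
  Hence the lengths of the deletion squares starting at a fixed position grow at least by the
  factor 5/4, so there are fewer than log_{5/4} n of them, and summing over
  the n positions gives the bound.\<close>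

definition deletion_square :: "'a list \<Rightarrow> bool" where
  "deletion_square U \<longleftrightarrow> (\<exists>W1 W2 x. U = W1 @ x # W2 @ W1 @ W2)"

definition extension_square :: "'a list \<Rightarrow> bool" where
  "extension_square U \<longleftrightarrow> (\<exists>W1 W2 x. U = W1 @ W2 @ W1 @ x # W2)"

lemma almost_square_imp_deletion_or_extension_square:
  "almost_square U \<Longrightarrow> deletion_square U \<or> extension_square U"
  unfolding almost_square_def is_extension_def is_deletion_def
    deletion_square_def extension_square_def
  by fastforce

lemma extension_square_rev_iff: "extension_square (rev U) \<longleftrightarrow> deletion_square U"
proof
  assume "extension_square (rev U)"
  then obtain W1 W2 x where "rev U = W1 @ W2 @ W1 @ x # W2"
    unfolding extension_square_def by blast
  then have "U = rev (W1 @ W2 @ W1 @ x # W2)" by (metis rev_rev_ident)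
  then have "U = rev W2 @ x # rev W1 @ rev W2 @ rev W1" by simp
  then show "deletion_square U" unfolding deletion_square_def by blast
next
  assume "deletion_square U"
  then obtain W1 W2 x where "U = W1 @ x # W2 @ W1 @ W2"
    unfolding deletion_square_def by blast
  then have "rev U = rev W2 @ rev W1 @ rev W2 @ x # rev W1" by simp
  then show "extension_square (rev U)" unfolding extension_square_def by blast
qed

lemma is_factor_trans: "is_factor u v \<Longrightarrow> is_factor v w \<Longrightarrow> is_factor u w"
  unfolding is_factor_def by (metis append.assoc)

lemma square_free_factor: "square_free w \<Longrightarrow> is_factor u w \<Longrightarrow> square_free u"
  unfolding square_free_def by (meson is_factor_trans)

lemma square_free_rev:
  assumes "square_free w"
  shows "square_free (rev w)"
  unfolding square_free_def
proof clarify
  fix Y assume "Y \<noteq> []" "is_factor (Y @ Y) (rev w)"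
  then obtain p s where "rev w = p @ (Y @ Y) @ s" unfolding is_factor_def by blast
  then have "w = rev (p @ (Y @ Y) @ s)" by (metis rev_rev_ident)
  then have "w = rev s @ (rev Y @ rev Y) @ rev p" by simp
  with \<open>Y \<noteq> []\<close> show False using assms unfolding square_free_def is_factor_def by blast
qed

lemma square_free_drop: "square_free w \<Longrightarrow> square_free (drop i w)"
proof (rule square_free_factor)
  have "w = take i w @ drop i w @ []" by simp
  then show "is_factor (drop i w) w" unfolding is_factor_def by blast
qed

lemma square_free_nth:
  assumes "square_free w" "0 < h" "a + 2 * h \<le> length w"
    and "\<And>t. t < h \<Longrightarrow> w ! (a + t) = w ! (a + t + h)"
  shows False
proof -
  define Y where "Y = take h (drop a w)"
  have "take h (drop (a + h) w) = Y"
    unfolding Y_def using assms(3,4) by (intro nth_equalityI) (auto simp: ac_simps)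
  then have "take (h + h) (drop a w) = Y @ Y"
    by (simp add: take_add Y_def add.commute)
  then have "w = take a w @ (Y @ Y) @ drop (h + h) (drop a w)"
    by (metis append_take_drop_id)
  moreover have "Y \<noteq> []" using assms(2,3) by (simp add: Y_def)
  ultimately show False using assms(1) unfolding square_free_def is_factor_def by blast
qed

text \<open>w begins with a deletion square W1 x W2 W1 W2 of length 2k - 1, where p = |W1| is the
  position of the deleted letter x.\<close>
definition gapped_period :: "'a list \<Rightarrow> nat \<Rightarrow> nat \<Rightarrow> bool" where
  "gapped_period w k p \<longleftrightarrow> p < k \<and> 2 * k \<le> length w + 1
     \<and> (\<forall>j<p. w ! j = w ! (j + k)) \<and> (\<forall>j. p < j \<and> j < k \<longrightarrow> w ! j = w ! (j + k - 1))"

lemma gapped_periodD: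
  assumes "gapped_period w k p"
  shows "p < k" "2 * k \<le> length w + 1"
    and "j < p \<Longrightarrow> w ! j = w ! (j + k)"
    and "p < j \<Longrightarrow> j < k \<Longrightarrow> w ! j = w ! (j + k - 1)"
  using assms unfolding gapped_period_def by auto

lemma gapped_period_deletion_square:
  "gapped_period (W1 @ x # W2 @ W1 @ W2) (length W1 + 1 + length W2) (length W1)"
  unfolding gapped_period_def by (auto simp: nth_append nth_Cons')

lemma gapped_period_append:
  assumes "gapped_period u k p"
  shows "gapped_period (u @ v) k p"
proof -
  have prefix: "(u @ v) ! j = u ! j" if "j + 1 < 2 * k" for j
    using that gapped_periodD(2)[OF assms] by (simp add: nth_append)
  show ?thesis
    unfolding gapped_period_def
    using gapped_periodD[OF assms] prefix by auto
qed

lemma deletion_square_prefix_gapped_period: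
  assumes "deletion_square (take l w)" "l \<le> length w"
  obtains k p where "l + 1 = 2 * k" "gapped_period w k p"
proof -
  obtain W1 W2 x where U: "take l w = W1 @ x # W2 @ W1 @ W2"
    using assms(1) unfolding deletion_square_def by blast
  have "gapped_period (take l w @ drop l w) (length W1 + 1 + length W2) (length W1)"
    unfolding U by (intro gapped_period_append gapped_period_deletion_square)
  moreover have "l = length (take l w)" using assms(2) by simp
  then have "l + 1 = 2 * (length W1 + 1 + length W2)" unfolding U by simp
  ultimately show thesis by (metis that append_take_drop_id)
qed

text \<open>Each lemma below exhibits a window on which the two gapped periods send the letter at
  every position and the letter d (or d \<plusminus> 1, or k) places further to one and the same
  letter; square-freeness forbids such a window.\<close>
locale two_gapped_periods =
  fixes w :: "'a list" and k p d p' :: nat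
  assumes square_free: "square_free w"
    and short: "gapped_period w k p"
    and long: "gapped_period w (k + d) p'"
    and d_pos: "0 < d"
begin

lemma gaps_not_both_late:
  assumes "d \<le> p'"
  shows "p < 2 * d"
proof (rule ccontr)
  assume "\<not> p < 2 * d"
  show False
  proof (rule square_free_nth[OF square_free d_pos, of 0])
    show "0 + 2 * d \<le> length w"
      using gapped_periodD(1,2)[OF short] \<open>\<not> p < 2 * d\<close> by linarith
    fix t assume "t < d"
    have "w ! t = w ! (t + (k + d))"
      using gapped_periodD(3)[OF long] \<open>t < d\<close> assms by simp
    also have "\<dots> = w ! (t + d)"
      using gapped_periodD(3)[OF short, of "t + d"] \<open>t < d\<close> \<open>\<not> p < 2 * d\<close>
      by (simp add: ac_simps)
    finally show "w ! (0 + t) = w ! (0 + t + d)" by simp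
  qed
qed

lemma no_room_after_gaps:
  assumes "p' < a" "p < a + d"
  shows "k < a + 2 * d"
proof (rule ccontr)
  assume "\<not> k < a + 2 * d"
  show False
  proof (rule square_free_nth[OF square_free d_pos, of a])
    show "a + 2 * d \<le> length w"
      using gapped_periodD(2)[OF short] \<open>\<not> k < a + 2 * d\<close> d_pos by linarith
    fix t assume "t < d"
    have "w ! (a + t) = w ! (a + t + (k + d) - 1)"
      using gapped_periodD(4)[OF long, of "a + t"] \<open>t < d\<close> \<open>\<not> k < a + 2 * d\<close> assms
      by linarith
    also have "\<dots> = w ! (a + t + d)"
      using gapped_periodD(4)[OF short, of "a + t + d"] \<open>t < d\<close> \<open>\<not> k < a + 2 * d\<close> assms
      by (simp add: ac_simps)
    finally show "w ! (a + t) = w ! (a + t + d)" .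
  qed
qed

lemma no_room_between_gaps:
  assumes "p \<le> a + d" "a + d < p'"
  shows "k \<le> a + 2 * d + 1"
proof (rule ccontr)
  assume "\<not> k \<le> a + 2 * d + 1"
  show False
  proof (rule square_free_nth[OF square_free, of "d + 1" a])
    show "a + 2 * (d + 1) \<le> length w"
      using gapped_periodD(2)[OF short] \<open>\<not> k \<le> a + 2 * d + 1\<close> by arith
    fix t assume "t < d + 1"
    have "w ! (a + t) = w ! (a + t + (k + d))"
      using gapped_periodD(3)[OF long, of "a + t"] \<open>t < d + 1\<close> assms by simp
    also have "\<dots> = w ! (a + t + (d + 1))"
      using gapped_periodD(4)[OF short, of "a + t + (d + 1)"] \<open>t < d + 1\<close>
        \<open>\<not> k \<le> a + 2 * d + 1\<close> assms
      by (simp add: ac_simps)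
    finally show "w ! (a + t) = w ! (a + t + (d + 1))" .
  qed simp
qed

lemma long_gap_not_early: "p + 1 < p' + 2 * d"
proof (rule ccontr)
  assume early: "\<not> p + 1 < p' + 2 * d"
  show False
  proof (cases "d = 1")
    case True
    show False
    proof (rule square_free_nth[OF square_free, of k 0])
      show "0 < k" "0 + 2 * k \<le> length w"
        using gapped_periodD(1,2)[OF short] gapped_periodD(2)[OF long] True by arith+
      fix t assume "t < k"
      show "w ! (0 + t) = w ! (0 + t + k)"
      proof (cases "t < p")
        case True
        then show ?thesis using gapped_periodD(3)[OF short] by simp
      next
        case False
        then show ?thesis
          using gapped_periodD(4)[OF long, of t] \<open>t < k\<close> \<open>d = 1\<close> early by simp
      qed
    qed
  next
    case False
    define e where "e = d - 1"
    have e: "d = e + 1" "0 < e" using False d_pos unfolding e_def by arith+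
    show False
    proof (rule square_free_nth[OF square_free \<open>0 < e\<close>, of "p' + 1"])
      show "p' + 1 + 2 * e \<le> length w"
        using gapped_periodD(1,2)[OF short] early e by linarith
      fix t assume "t < e"
      have "w ! (p' + 1 + t) = w ! (p' + 1 + t + (k + d) - 1)"
        using gapped_periodD(4)[OF long, of "p' + 1 + t"] gapped_periodD(1)[OF short]
          \<open>t < e\<close> early e
        by linarith
      also have "\<dots> = w ! (p' + 1 + t + e)"
        using gapped_periodD(3)[OF short, of "p' + 1 + t + e"] \<open>t < e\<close> early e
        by (simp add: ac_simps)
      finally show "w ! (p' + 1 + t) = w ! (p' + 1 + t + e)" .
    qed
  qed
qed

lemma short_period_bound: "k < 4 * d"
proof (rule ccontr)
  assume "\<not> k < 4 * d"
  have "p < k" "p' < k + d"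
    using gapped_periodD(1) short long by blast+
  consider "p' + d \<le> p" | "p < p' + d" by linarith
  then show False
  proof cases
    case 1
    then have "k < p + 1 + d"
      using no_room_after_gaps[of "p + 1 - d"] by linarith
    then show False
      using gaps_not_both_late long_gap_not_early \<open>\<not> k < 4 * d\<close> by linarith
  next
    case 2
    then have "k < p' + 1 + 2 * d"
      using no_room_after_gaps[of "p' + 1"] by linarith
    then have "p < 2 * d"
      using gaps_not_both_late \<open>\<not> k < 4 * d\<close> by linarith
    then show False
      using no_room_between_gaps[of "p - d"] \<open>k < p' + 1 + 2 * d\<close> \<open>\<not> k < 4 * d\<close> d_pos
      by linarith
  qed
qed

end

lemma gapped_periods_far_apart:
  assumes "square_free w" "gapped_period w k p" "gapped_period w k' p'" "k < k'"
  shows "k < 4 * (k' - k)"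
proof -
  interpret two_gapped_periods w k p "k' - k" p'
    using assms by unfold_locales auto
  show ?thesis by (rule short_period_bound)
qed

lemma Max_ge_geometric:
  fixes r c :: real
  assumes "finite S" "card S = Suc m" "0 \<le> r"
    and "\<forall>x\<in>S. c \<le> real x" "\<forall>x\<in>S. \<forall>y\<in>S. x < y \<longrightarrow> r * real x \<le> real y"
  shows "c * r ^ m \<le> real (Max S)"
  using assms
proof (induction m arbitrary: S)
  case 0
  then obtain x where "S = {x}" by (auto simp: card_Suc_eq)
  then show ?case using 0 by simp
next
  case (Suc m)
  let ?S' = "S - {Max S}"
  have "S \<noteq> {}" using Suc.prems(2) by auto
  then have "Max S \<in> S" using Suc.prems(1) by simp
  then have "card ?S' = Suc m" using Suc.prems(1,2) by simp
  then have "?S' \<noteq> {}" by (metis card.empty Zero_not_Suc)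
  have IH: "c * r ^ m \<le> real (Max ?S')"
    using Suc.prems \<open>card ?S' = Suc m\<close> by (intro Suc.IH) auto
  have "Max ?S' \<in> ?S'" using Suc.prems(1) \<open>?S' \<noteq> {}\<close> by (intro Max_in) auto
  then have "Max ?S' < Max S"
    using Suc.prems(1) by (auto intro: le_neq_trans)
  then have "r * real (Max ?S') \<le> real (Max S)"
    using Suc.prems(5) \<open>Max S \<in> S\<close> \<open>Max ?S' \<in> ?S'\<close> by auto
  moreover have "c * r ^ Suc m \<le> r * real (Max ?S')"
    using mult_left_mono[OF IH Suc.prems(3)] by (simp add: mult.left_commute)
  ultimately show ?case by linarith
qed

lemma card_less_log_of_ratio_gaps:
  fixes r :: real
  assumes "finite S" "S \<subseteq> {1..n}" "2 \<le> n" "1 < r" "r\<^sup>2 < 2"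
    and gaps: "\<forall>x\<in>S. \<forall>y\<in>S. x < y \<longrightarrow> r * real x \<le> real y"
  shows "real (card S) < log r (real n)"
proof -
  have "r ^ card S < real n"
  proof (cases "card S \<le> 1")
    case True
    have "r < r\<^sup>2" using assms(4) by (simp add: power2_eq_square)
    then have "r < 2" using assms(5) by linarith
    moreover have "r ^ card S \<le> r" using True assms(4) by (cases "card S") auto
    ultimately show ?thesis using assms(3) by linarith
  next
    case False
    then have "card S = Suc (Suc (card S - 2))" by simp
    then obtain m where m: "card S = Suc (Suc m)" by blast
    let ?S' = "S - {Min S}"
    have "Min S \<in> S" using m assms(1) by (intro Min_in) auto
    then have "card ?S' = Suc m" using m assms(1) by simp
    text \<open>Integrality gains the factor 2 > r^2 that makes the bound strict.\<close>
    have "\<forall>x\<in>?S'. 2 \<le> real x"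
    proof
      fix x assume "x \<in> ?S'"
      then have "Min S < x" using assms(1) by (auto intro: le_neq_trans)
      moreover have "1 \<le> Min S" using \<open>Min S \<in> S\<close> assms(2) by auto
      ultimately show "2 \<le> real x" by linarith
    qed
    then have "2 * r ^ m \<le> real (Max ?S')"
      using Max_ge_geometric[OF _ \<open>card ?S' = Suc m\<close>] assms(1,4) gaps by auto
    moreover have "Max ?S' \<le> n"
      using \<open>card ?S' = Suc m\<close> assms(1,2) Max_in[of ?S'] by fastforce
    moreover have "r ^ card S < 2 * r ^ m"
      using m assms(4,5) by (simp add: power2_eq_square)
    ultimately show ?thesis by linarith
  qed
  then show ?thesis
    using assms(3,4) by (simp add: less_log_iff powr_realpow)
qed

definition prefix_lengths :: "('a list \<Rightarrow> bool) \<Rightarrow> 'a list \<Rightarrow> nat set" where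
  "prefix_lengths P w = {l. 0 < l \<and> l \<le> length w \<and> P (take l w)}"

definition factor_occs :: "('a list \<Rightarrow> bool) \<Rightarrow> 'a list \<Rightarrow> (nat \<times> nat) set" where
  "factor_occs P Q = {(i, l). 0 < l \<and> i + l \<le> length Q \<and> P (take l (drop i Q))}"

lemma prefix_lengths_subset: "prefix_lengths P w \<subseteq> {1..length w}"
  by (auto simp: prefix_lengths_def)

lemma finite_prefix_lengths: "finite (prefix_lengths P w)"
  using prefix_lengths_subset finite_subset by blast

lemma factor_occs_eq_Sigma:
  "factor_occs P Q = (SIGMA i:{..<length Q}. prefix_lengths P (drop i Q))"
  by (auto simp: factor_occs_def prefix_lengths_def)

lemma finite_factor_occs: "finite (factor_occs P Q)"
  by (simp add: factor_occs_eq_Sigma finite_prefix_lengths)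

lemma card_factor_occs:
  "card (factor_occs P Q) = (\<Sum>i<length Q. card (prefix_lengths P (drop i Q)))"
  by (simp add: factor_occs_eq_Sigma card_SigmaI finite_prefix_lengths)

lemma take_drop_rev:
  "i + l \<le> length Q \<Longrightarrow> take l (drop (length Q - (i + l)) (rev Q)) = rev (take l (drop i Q))"
  by (intro nth_equalityI) (auto simp: rev_nth)

lemma card_factor_occs_rev:
  "card (factor_occs (\<lambda>u. P (rev u)) (rev Q)) = card (factor_occs P Q)"
proof -
  let ?f = "\<lambda>(i, l). (length Q - (i + l), l)"
  have "bij_betw ?f (factor_occs P Q) (factor_occs (\<lambda>u. P (rev u)) (rev Q))"
  proof (rule bij_betw_byWitness[where f' = ?f])
    show "\<forall>a\<in>factor_occs P Q. ?f (?f a) = a"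
      by (auto simp: factor_occs_def)
    show "\<forall>a\<in>factor_occs (\<lambda>u. P (rev u)) (rev Q). ?f (?f a) = a"
      by (auto simp: factor_occs_def)
    show "?f ` factor_occs P Q \<subseteq> factor_occs (\<lambda>u. P (rev u)) (rev Q)"
      by (auto simp: factor_occs_def take_drop_rev)
    show "?f ` factor_occs (\<lambda>u. P (rev u)) (rev Q) \<subseteq> factor_occs P Q"
      using take_drop_rev[of _ _ "rev Q"] by (auto simp: factor_occs_def)
  qed
  then show ?thesis by (simp add: bij_betw_same_card)
qed

lemma deletion_square_prefix_lengths_ratio:
  assumes "square_free w" "l \<in> prefix_lengths deletion_square w"
    "l' \<in> prefix_lengths deletion_square w" "l < l'"
  shows "5 * l \<le> 4 * l'"
proof -
  obtain k p where k: "l + 1 = 2 * k" "gapped_period w k p"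
    using assms(2) deletion_square_prefix_gapped_period unfolding prefix_lengths_def by blast
  obtain k' p' where k': "l' + 1 = 2 * k'" "gapped_period w k' p'"
    using assms(3) deletion_square_prefix_gapped_period unfolding prefix_lengths_def by blast
  have "k < k'" using k(1) k'(1) assms(4) by linarith
  then have "k < 4 * (k' - k)" using gapped_periods_far_apart assms(1) k(2) k'(2) by blast
  then show ?thesis using k(1) k'(1) \<open>k < k'\<close> by arith
qed

lemma card_deletion_square_prefix_lengths:
  assumes "square_free w" "length w \<le> n" "2 \<le> n"
  shows "real (card (prefix_lengths deletion_square w)) < log (5/4) (real n)"
proof (rule card_less_log_of_ratio_gaps[OF finite_prefix_lengths _ assms(3)])
  show "prefix_lengths deletion_square w \<subseteq> {1..n}"
    using prefix_lengths_subset assms(2) by fastforce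
  show "\<forall>x\<in>prefix_lengths deletion_square w. \<forall>y\<in>prefix_lengths deletion_square w.
      x < y \<longrightarrow> 5 / 4 * real x \<le> real y"
    using deletion_square_prefix_lengths_ratio[OF assms(1)] by fastforce
qed (simp_all add: power2_eq_square)

lemma card_deletion_square_occs:
  assumes "square_free Q" "2 \<le> length Q"
  shows "real (card (factor_occs deletion_square Q))
    < real (length Q) * log (5/4) (real (length Q))"
proof -
  have "real (card (factor_occs deletion_square Q))
      = (\<Sum>i<length Q. real (card (prefix_lengths deletion_square (drop i Q))))"
    by (simp add: card_factor_occs)
  also have "\<dots> < (\<Sum>i<length Q. log (5/4) (real (length Q)))"
    using assms
    by (intro sum_strict_mono card_deletion_square_prefix_lengths square_free_drop)
      (auto simp: lessThan_empty_iff)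
  also have "\<dots> = real (length Q) * log (5/4) (real (length Q))"
    by simp
  finally show ?thesis .
qed

theorem mainTheorem7:
  fixes Q :: "'a list"
  assumes "square_free Q" and "length Q \<ge> 2"
  shows "real (card (almost_square_occs Q)) < 2 * real (length Q) * log (5/4) (real (length Q))"
proof -
  have "almost_square_occs Q \<subseteq> factor_occs deletion_square Q \<union> factor_occs extension_square Q"
    using almost_square_imp_deletion_or_extension_square
    by (fastforce simp: almost_square_occs_def factor_occs_def)
  then have "card (almost_square_occs Q)
      \<le> card (factor_occs deletion_square Q) + card (factor_occs extension_square Q)"
    by (meson card_mono card_Un_le finite_UnI finite_factor_occs order_trans)
  moreover have "card (factor_occs extension_square Q) = card (factor_occs deletion_square (rev Q))"
    using card_factor_occs_rev[of extension_square Q] by (simp add: extension_square_rev_iff)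
  moreover have "real (card (factor_occs deletion_square (rev Q)))
      < real (length Q) * log (5/4) (real (length Q))"
    using card_deletion_square_occs[OF square_free_rev] assms by simp
  ultimately show ?thesis
    using card_deletion_square_occs[OF assms] by linarith
qed

end
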